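(* Consider the TeeRollup protocol described in the context, and let $st_h$ be the latest state recorded by the TeeRollup smart contract (TSC). If a malicious sequencer with a compromised TEE forges an invalid state $st_{h+1}'$ with transaction list $txs_{h+1}'$, i.e. $st_{h+1}'$ is not the state obtained by executing $txs_{h+1}'$ on the initial state $st_h$, then the TSC will not accept $st_{h+1}'$.
   Context: TeeRollup is a rollup protocol on a main chain with finality and smart contracts. There are $n$ sequencers $p_1,\dots,p_n$, each equipped with a TEE enclave $\eta_i$ holding a key pair $(pk_i,sk_i)$ whose public keys are registered on-chain; at most $f$ of these TEEs are compromised (for a compromised TEE the adversary knows $sk_i$ and can sign arbitrary messages), and the remaining TEEs are uncompromised. Malicious sequencers fully control the inputs and outputs of their enclaves (they may choose inputs, delay, drop or replay messages). Rollup states form a chain: a state at height $h$ is $st_h = \langle h, H(st_{h-1}), R_h, H(txs_h)\rangle$, where $H$ is a secure (collision-resistant) hash function, $R_h$ is the Merkle root of the account tree (addresses and balances) and $txs_h$ is the batch of transactions executed to produce $st_h$; the state transition is $st_{h+1} \leftarrow execute(st_h, txs_{h+1})$. An uncompromised enclave, given an input state $s$ and a batch $txs$, runs the fixed protocol program: it outputs the state $execute(s,txs)$, whose previous-hash field is $H(s)$, and signs (with $sk_i$) only states produced this way. A quorum certificate (QC) for a state is a set of valid signatures on its hash from at least $f+1$ distinct registered sequencers. The TSC records the latest accepted state $st_h$ and accepts a submitted state $S$ only if $S$ has height $h+1$, the previous-hash field of $S$ equals $H(st_h)$, and $S$ comes with a valid QC. *)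

theory Defs
  imports Main
begin

(* A rollup state  st_h = <h, H(st_{h-1}), R_h, H(txs_h)>.
   'd = hash digests, 'r = Merkle roots of the account tree. *)
datatype ('d, 'r) rstate =
  State (height: nat) (prev_hash: 'd) (root: 'r) (txs_hash: 'd)

(* A quorum certificate for state S: valid signatures on H(S) from at least
   f+1 distinct registered sequencers (registered = {1..n}).
   sig_ok i d  means: a valid signature under pk_i on message d is available. *)
definition valid_QC ::
  "nat \<Rightarrow> nat \<Rightarrow> (nat \<Rightarrow> 'd \<Rightarrow> bool) \<Rightarrow> (('d,'r) rstate \<Rightarrow> 'd)
    \<Rightarrow> ('d,'r) rstate \<Rightarrow> bool" where
  "valid_QC n f sig_ok Hs S \<longleftrightarrow>
     (\<exists>Q. Q \<subseteq> {1..n} \<and> card Q \<ge> f + 1 \<and> (\<forall>i\<in>Q. sig_ok i (Hs S)))"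

definition tsc_accepts ::
  "nat \<Rightarrow> nat \<Rightarrow> (nat \<Rightarrow> 'd \<Rightarrow> bool) \<Rightarrow> (('d,'r) rstate \<Rightarrow> 'd)
    \<Rightarrow> ('d,'r) rstate \<Rightarrow> ('d,'r) rstate \<Rightarrow> bool" where
  "tsc_accepts n f sig_ok Hs st S \<longleftrightarrow>
     height S = height st + 1 \<and> prev_hash S = Hs st \<and> valid_QC n f sig_ok Hs S"

end

theory Submission
  imports Defs
begin

(* A quorum of f + 1 signers cannot consist of at most f compromised TEEs, so every
   accepted state carries the signature of an uncompromised enclave.  Such an enclave
   signs only hashes of executed states, and by collision resistance the accepted state
   is then itself an output execute s txs.  Its previous-hash and transaction-hash fields
   pin down s = st and txs = txs', again by collision resistance, so the accepted state
   is the valid successor, not a forgery. *)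

lemma exists_not_in_smaller_set:
  assumes "finite C" and "card C < card Q"
  shows "\<exists>i\<in>Q. i \<notin> C"
proof (rule ccontr)
  assume "\<not> (\<exists>i\<in>Q. i \<notin> C)"
  then have "Q \<subseteq> C" by blast
  with \<open>finite C\<close> have "card Q \<le> card C" by (rule card_mono)
  with \<open>card C < card Q\<close> show False by simp
qed

lemma valid_QC_has_honest_signer:
  assumes "valid_QC n f sig_ok Hs S" and "C \<subseteq> {1..n}" and "card C \<le> f"
  shows "\<exists>i\<in>{1..n}. i \<notin> C \<and> sig_ok i (Hs S)"
proof -
  obtain Q where Q: "Q \<subseteq> {1..n}" "card Q \<ge> f + 1" "\<forall>i\<in>Q. sig_ok i (Hs S)"
    using assms(1) unfolding valid_QC_def by blast
  have "finite C" using \<open>C \<subseteq> {1..n}\<close> finite_subset by blast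
  moreover have "card C < card Q" using Q(2) \<open>card C \<le> f\<close> by simp
  ultimately obtain i where "i \<in> Q" "i \<notin> C" using exists_not_in_smaller_set by blast
  then show ?thesis using Q by blast
qed

lemma execute_eq_if_hashes_eq:
  assumes "inj Hs" and "inj Ht"
    and exec_prev: "\<And>s txs. prev_hash (execute s txs) = Hs s"
    and exec_txs: "\<And>s txs. txs_hash (execute s txs) = Ht txs"
    and "prev_hash (execute s txs) = Hs st" and "txs_hash (execute s txs) = Ht txs'"
  shows "execute s txs = execute st txs'"
proof -
  have "s = st" using assms(5) exec_prev \<open>inj Hs\<close> by (simp add: inj_eq)
  moreover have "txs = txs'" using assms(6) exec_txs \<open>inj Ht\<close> by (simp add: inj_eq)
  ultimately show ?thesis by simp
qed

theorem lemma2: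
  fixes n f :: nat
    and Hs :: "('d,'r) rstate \<Rightarrow> 'd"      (* H on states *)
    and Ht :: "'t \<Rightarrow> 'd"                   (* H on transaction batches *)
    and execute :: "('d,'r) rstate \<Rightarrow> 't \<Rightarrow> ('d,'r) rstate"
    and sig_ok :: "nat \<Rightarrow> 'd \<Rightarrow> bool"
    and C :: "nat set"                          (* compromised TEEs *)
    and st st' :: "('d,'r) rstate" and txs' :: 't
  assumes Hs_cr: "inj Hs" and Ht_cr: "inj Ht"
    and exec_height: "\<And>s txs. height (execute s txs) = height s + 1"
    and exec_prev: "\<And>s txs. prev_hash (execute s txs) = Hs s"
    and exec_txs: "\<And>s txs. txs_hash (execute s txs) = Ht txs"
    and C_sub: "C \<subseteq> {1..n}" and C_card: "card C \<le> f"
    and honest_sign: "\<And>i d. i \<in> {1..n} \<Longrightarrow> i \<notin> C \<Longrightarrow> sig_ok i d \<Longrightarrow>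
                         \<exists>s txs. d = Hs (execute s txs)"
    and forged_txs: "txs_hash st' = Ht txs'"
    and invalid: "st' \<noteq> execute st txs'"
  shows "\<not> tsc_accepts n f sig_ok Hs st st'"
proof
  assume "tsc_accepts n f sig_ok Hs st st'"
  then have QC: "valid_QC n f sig_ok Hs st'" and prev: "prev_hash st' = Hs st"
    unfolding tsc_accepts_def by blast+
  obtain i where "i \<in> {1..n}" "i \<notin> C" "sig_ok i (Hs st')"
    using valid_QC_has_honest_signer[OF QC C_sub C_card] by blast
  then obtain s txs where "Hs st' = Hs (execute s txs)"
    using honest_sign by blast
  then have st'_exec: "st' = execute s txs" using Hs_cr by (simp add: inj_eq)
  have "st' = execute st txs'"
    using execute_eq_if_hashes_eq[OF Hs_cr Ht_cr exec_prev exec_txs] prev forged_txs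
    unfolding st'_exec by blast
  with invalid show False by contradiction
qed

end
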